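(* Let $f:\mathbb{R}^n\to\mathbb{R}$ be bounded below, and suppose $\nabla f$ is Lipschitz continuous with constant $L$ on a (sufficiently large) open bounded domain $\mathcal{X}\subset\mathbb{R}^n$. Let $q=(n^2+3n)/2$ and let $n<p<q$. Let $\delta>0$ and let $\mathcal{Y}=\{y^0,y^1,\dots,y^p\}\subset\overline{B}(y^0,\delta)$. Let $\mathrm{m}$ be a quadratic polynomial in $n$ variables and suppose there is a constant $\kappa\ge 0$ such that $|\mathrm{m}(y^j)-f(y^j)|\le\kappa\delta^2$ for every $y^j\in\mathcal{Y}$. Let $\mathbf{L}_s\in\mathbb{R}^{p\times n}$ be the matrix whose $i$-th row is $(y^i-y^0)^T$, $i=1,\dots,p$, and let $\hat{\mathbf{L}}_s=\frac{1}{\delta}\mathbf{L}_s$. Assume that $\mathbf{L}_s$ has full column rank ($\operatorname{rank}(\mathbf{L}_s)=n$) and that there is a constant $\kappa_s>0$ with $\|\hat{\mathbf{L}}_s^{\dagger}\|\le\kappa_s$, where $\hat{\mathbf{L}}_s^{\dagger}$ is the Moore--Penrose pseudo-inverse of $\hat{\mathbf{L}}_s$. Assume also that the (constant) Hessian $\mathbf{H}=\nabla^2\mathrm{m}$ of the model satisfies $\|\mathbf{H}\|\le\kappa_H$ for some constant $\kappa_H\ge 0$. Then for all $x\in\mathcal{X}\cap\overline{B}(y^0,\delta)$, \[ |f(x)-\mathrm{m}(x)|\le\Big(\tfrac12(L+\kappa_H)+\kappa+2\kappa_s\sqrt{p}\,\big(L+\kappa+\tfrac34\kappa_H\big)\Big)\delta^2,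 \] \[ \|\nabla f(x)-\nabla\mathrm{m}(x)\|\le 2\kappa_s\sqrt{p}\,\big(L+\kappa+\tfrac34\kappa_H\big)\delta. \]
   Context: $\overline{B}(x,\delta)$ denotes the closed Euclidean ball of center $x$ and radius $\delta$; $\|\cdot\|$ is the Euclidean vector norm and the induced (spectral) matrix norm. $q+1=(n+1)(n+2)/2$ is the dimension of the space of polynomials of degree at most $2$ in $n$ variables. *)

theory Defs
  imports "HOL-Analysis.Analysis"
begin

definition penrose_inverse :: "real^'n^'m \<Rightarrow> real^'m^'n \<Rightarrow> bool" where
  "penrose_inverse A X \<longleftrightarrow>
     A ** X ** A = A \<and> X ** A ** X = X \<and>
     transpose (A ** X) = A ** X \<and> transpose (X ** A) = X ** A"

definition pinv :: "real^'n^'m \<Rightarrow> real^'m^'n" where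
  "pinv A = (THE X. penrose_inverse A X)"

definition spec_norm :: "real^'n^'m \<Rightarrow> real" where
  "spec_norm A = onorm (\<lambda>v. A *v v)"

text \<open>Quadratic model m(x) = c + g.x + 1/2 x^T H x (H symmetric) and its gradient.\<close>
definition quad_model :: "real \<Rightarrow> real^'n \<Rightarrow> real^'n^'n \<Rightarrow> real^'n \<Rightarrow> real" where
  "quad_model c g H x = c + g \<bullet> x + (1/2) * (x \<bullet> (H *v x))"

definition quad_model_grad :: "real^'n \<Rightarrow> real^'n^'n \<Rightarrow> real^'n \<Rightarrow> real^'n" where
  "quad_model_grad g H x = g + H *v x"

end

theory Submission
  imports Defs
begin

(* The error e = f - m has gradient G = grad f - grad m, which is (L + kappa_H)-Lipschitz on the
   ball. The Taylor estimate for functions with Lipschitz gradient, applied on the segment from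
   y0 to y_i, bounds every entry (y_i - y0) . G(x) of Ls G(x) by (2 kappa + 3/2 (L + kappa_H)) delta^2.
   Since Ls has full column rank, the pseudo-inverse of Ls / delta is a left inverse, so
   |G(x)| <= kappa_s |Ls G(x)| / delta, which gives the gradient bound.
   The value bound follows from the same Taylor estimate between x and y0. *)

lemma penrose_inverse_unique:
  assumes X: "penrose_inverse A X" and Z: "penrose_inverse A Z"
  shows "X = Z"
proof -
  from X have AXA: "A ** X ** A = A" and XAX: "X ** A ** X = X"
    and AX: "transpose (A ** X) = A ** X" and XA: "transpose (X ** A) = X ** A"
    unfolding penrose_inverse_def by blast+
  from Z have AZA: "A ** Z ** A = A" and ZAZ: "Z ** A ** Z = Z"
    and AZ: "transpose (A ** Z) = A ** Z" and ZA: "transpose (Z ** A) = Z ** A"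
    unfolding penrose_inverse_def by blast+
  have "A ** X = transpose (A ** Z ** A ** X)"
    using AX AZA by simp
  also have "\<dots> = transpose (A ** X) ** transpose (A ** Z)"
    by (simp add: matrix_transpose_mul matrix_mul_assoc)
  also have "\<dots> = A ** X ** (A ** Z)"
    using AX AZ by simp
  also have "\<dots> = A ** Z"
    using AXA by (metis matrix_mul_assoc)
  finally have AX_AZ: "A ** X = A ** Z" .
  have "X ** A = transpose (X ** (A ** Z ** A))"
    using XA AZA by simp
  also have "\<dots> = transpose (Z ** A) ** transpose (X ** A)"
    by (simp add: matrix_transpose_mul matrix_mul_assoc)
  also have "\<dots> = Z ** A ** (X ** A)"
    using XA ZA by simp
  also have "\<dots> = Z ** A"
    using AXA by (metis matrix_mul_assoc)
  finally have XA_ZA: "X ** A = Z ** A" .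
  have "X = Z ** A ** X"
    using XAX XA_ZA by simp
  also have "\<dots> = Z"
    using AX_AZ ZAZ by (metis matrix_mul_assoc)
  finally show ?thesis .
qed

lemma invertible_transpose_mult_self:
  fixes A :: "real^'n^'m"
  assumes "inj ((*v) A)"
  shows "invertible (transpose A ** A)"
proof -
  have "inj ((*v) (transpose A ** A))"
    unfolding vec.inj_iff_eq_0
  proof (intro allI impI)
    fix v assume "(transpose A ** A) *v v = 0"
    then have "((A *v v) v* A) \<bullet> v = 0"
      by (simp flip: matrix_vector_mul_assoc)
    then have "(A *v v) \<bullet> (A *v v) = 0"
      by (simp add: dot_lmul_matrix)
    then show "v = 0"
      using assms unfolding vec.inj_iff_eq_0 by simp
  qed
  then show ?thesis
    using invertible_left_inverse matrix_left_invertible_injective by blast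
qed

lemma penrose_left_inverseE:
  fixes A :: "real^'n^'m"
  assumes "inj ((*v) A)"
  obtains X where "penrose_inverse A X" and "X ** A = mat 1"
proof -
  define B where "B = transpose A ** A"
  obtain Bi where B_Bi: "B ** Bi = mat 1" and Bi_B: "Bi ** B = mat 1"
    using invertible_transpose_mult_self[OF assms] unfolding B_def invertible_def by blast
  have "transpose Bi ** B = mat 1"
    using arg_cong[OF B_Bi, of transpose] by (simp add: B_def matrix_transpose_mul)
  then have Bi_sym: "transpose Bi = Bi"
    by (metis B_Bi matrix_mul_assoc matrix_mul_lid matrix_mul_rid)
  define X where "X = Bi ** transpose A"
  have XA: "X ** A = mat 1"
    using Bi_B by (simp add: X_def B_def matrix_mul_assoc)
  have "penrose_inverse A X"
    unfolding penrose_inverse_def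
    using XA by (simp add: X_def matrix_transpose_mul Bi_sym matrix_mul_assoc[symmetric])
  with XA show ?thesis using that by blast
qed

lemma pinv_mult_self:
  fixes A :: "real^'n^'m"
  assumes "inj ((*v) A)"
  shows "pinv A ** A = mat 1"
proof -
  obtain X where X: "penrose_inverse A X" and XA: "X ** A = mat 1"
    using penrose_left_inverseE[OF assms] .
  have "pinv A = X"
    unfolding pinv_def using X penrose_inverse_unique by blast
  with XA show ?thesis by simp
qed

lemma norm_matrix_vector_mult_le: "norm (A *v v) \<le> spec_norm A * norm v"
  unfolding spec_norm_def by (rule onorm[OF matrix_vector_mul_bounded_linear])

lemma norm_le_spec_norm_pinv:
  fixes A :: "real^'n^'m"
  assumes "inj ((*v) A)"
  shows "norm v \<le> spec_norm (pinv A) * norm (A *v v)"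
  using norm_matrix_vector_mult_le[of "pinv A" "A *v v"]
  by (simp add: matrix_vector_mul_assoc pinv_mult_self[OF assms])

lemma abs_diff_le_of_deriv_le_linear:
  fixes h h' :: "real \<Rightarrow> real"
  assumes deriv: "\<And>t. t \<in> {0..1} \<Longrightarrow> (h has_real_derivative h' t) (at t)"
    and bound: "\<And>t. t \<in> {0..1} \<Longrightarrow> \<bar>h' t\<bar> \<le> B * t"
  shows "\<bar>h 1 - h 0\<bar> \<le> B / 2"
proof -
  have "s * (h 1 - h 0) \<le> B / 2" if s: "\<bar>s\<bar> = 1" for s
  proof -
    have "(\<lambda>t. s * h t - B / 2 * t\<^sup>2) 1 \<le> (\<lambda>t. s * h t - B / 2 * t\<^sup>2) 0"
    proof (rule deriv_nonpos_imp_antimono[where g = "\<lambda>t. s * h t - B / 2 * t\<^sup>2"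
          and g' = "\<lambda>t. s * h' t - B * t"])
      fix t :: real assume t: "t \<in> {0..1}"
      show "((\<lambda>t. s * h t - B / 2 * t\<^sup>2) has_real_derivative s * h' t - B * t) (at t)"
        by (auto intro!: derivative_eq_intros deriv[OF t])
      have "s * h' t \<le> \<bar>h' t\<bar>"
        using s abs_ge_self[of "s * h' t"] by (simp add: abs_mult)
      with bound[OF t] show "s * h' t - B * t \<le> 0" by simp
    qed simp
    then show ?thesis by (simp add: algebra_simps)
  qed
  from this[of 1] this[of "-1"] have "h 1 - h 0 \<le> B / 2" "h 0 - h 1 \<le> B / 2"
    by simp_all
  then show ?thesis
    unfolding abs_le_iff by linarith
qed

lemma lipschitz_gradient_taylor_bound:
  fixes e :: "'a::real_inner \<Rightarrow> real"
  assumes "convex S"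
    and grad: "\<And>z. z \<in> S \<Longrightarrow> GDERIV e z :> G z"
    and lip: "M-lipschitz_on S G"
    and "a \<in> S" "b \<in> S"
  shows "\<bar>e b - e a - G a \<bullet> (b - a)\<bar> \<le> M / 2 * (norm (b - a))\<^sup>2"
proof -
  define \<gamma> where "\<gamma> t = a + t *\<^sub>R (b - a)" for t
  have \<gamma>_in: "\<gamma> t \<in> S" if "t \<in> {0..1}" for t
    using convexD_alt[OF assms(1,4,5), of t] that by (simp add: \<gamma>_def algebra_simps)
  have "\<bar>(\<lambda>t. e (\<gamma> t) - t * (G a \<bullet> (b - a))) 1 - (\<lambda>t. e (\<gamma> t) - t * (G a \<bullet> (b - a))) 0\<bar>
          \<le> M * (norm (b - a))\<^sup>2 / 2"
  proof (rule abs_diff_le_of_deriv_le_linear[where h' = "\<lambda>t. (G (\<gamma> t) - G a) \<bullet> (b - a)"])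
    fix t :: real assume t: "t \<in> {0..1}"
    have "(\<gamma> has_derivative (\<lambda>s. s *\<^sub>R (b - a))) (at t)"
      unfolding \<gamma>_def by (auto intro!: derivative_eq_intros)
    from has_derivative_compose[OF this grad[OF \<gamma>_in[OF t], unfolded gderiv_def]]
    have "((\<lambda>t. e (\<gamma> t)) has_real_derivative G (\<gamma> t) \<bullet> (b - a)) (at t)"
      by (simp add: has_field_derivative_def inner_commute mult_commute_abs)
    then show "((\<lambda>t. e (\<gamma> t) - t * (G a \<bullet> (b - a))) has_real_derivative
                (G (\<gamma> t) - G a) \<bullet> (b - a)) (at t)"
      by (auto intro!: derivative_eq_intros simp: inner_diff_left)
    have "\<bar>(G (\<gamma> t) - G a) \<bullet> (b - a)\<bar> \<le> norm (G (\<gamma> t) - G a) * norm (b - a)"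
      by (rule Cauchy_Schwarz_ineq2)
    also have "\<dots> \<le> M * norm (\<gamma> t - a) * norm (b - a)"
      using lipschitz_on_normD[OF lip \<gamma>_in[OF t] assms(4)] by (simp add: mult_right_mono)
    also have "\<dots> = M * (norm (b - a))\<^sup>2 * t"
      using t by (simp add: \<gamma>_def power2_eq_square)
    finally show "\<bar>(G (\<gamma> t) - G a) \<bullet> (b - a)\<bar> \<le> M * (norm (b - a))\<^sup>2 * t" .
  qed
  then show ?thesis
    by (simp add: \<gamma>_def algebra_simps)
qed

lemma inner_gradient_le_of_lipschitz:
  fixes e :: "'a::real_inner \<Rightarrow> real"
  assumes "convex S"
    and grad: "\<And>z. z \<in> S \<Longrightarrow> GDERIV e z :> G z"
    and lip: "M-lipschitz_on S G"
    and "a \<in> S" "b \<in> S" "c \<in> S"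
  shows "\<bar>G c \<bullet> (b - a)\<bar> \<le>
           \<bar>e a\<bar> + \<bar>e b\<bar> + M * norm (a - c) * norm (b - a) + M / 2 * (norm (b - a))\<^sup>2"
proof -
  have "\<bar>(G a - G c) \<bullet> (b - a)\<bar> \<le> norm (G a - G c) * norm (b - a)"
    by (rule Cauchy_Schwarz_ineq2)
  also have "\<dots> \<le> M * norm (a - c) * norm (b - a)"
    using lipschitz_on_normD[OF lip assms(4,6)] by (simp add: mult_right_mono)
  finally have "\<bar>(G a - G c) \<bullet> (b - a)\<bar> \<le> M * norm (a - c) * norm (b - a)" .
  moreover have "\<bar>e b - e a - G a \<bullet> (b - a)\<bar> \<le> M / 2 * (norm (b - a))\<^sup>2"
    using lipschitz_gradient_taylor_bound[OF assms(1-5)] .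
  ultimately show ?thesis
    unfolding inner_diff_left by linarith
qed

lemma GDERIV_quad_model:
  assumes "transpose H = H"
  shows "GDERIV (quad_model c g H) x :> quad_model_grad g H x"
proof -
  have "x \<bullet> (H *v v) = (H *v x) \<bullet> v" for v
    using assms by (metis dot_lmul_matrix transpose_matrix_vector)
  then have "(\<lambda>v. g \<bullet> v + (v \<bullet> (H *v x) + x \<bullet> (H *v v)) / 2) = (\<lambda>v. v \<bullet> quad_model_grad g H x)"
    by (simp add: quad_model_grad_def inner_add_right inner_commute)
  moreover have "(quad_model c g H has_derivative
      (\<lambda>v. g \<bullet> v + (v \<bullet> (H *v x) + x \<bullet> (H *v v)) / 2)) (at x)"
    unfolding quad_model_def
    by (auto intro!: derivative_eq_intros bounded_linear_imp_has_derivative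
        matrix_vector_mul_bounded_linear simp: field_simps)
  ultimately show ?thesis
    unfolding gderiv_def by simp
qed

lemma spec_norm_nonneg: "spec_norm A \<ge> 0"
  unfolding spec_norm_def by (rule onorm_pos_le[OF matrix_vector_mul_bounded_linear])

lemma lipschitz_on_quad_model_grad: "(spec_norm H)-lipschitz_on S (quad_model_grad g H)"
proof (rule lipschitz_onI)
  show "0 \<le> spec_norm H"
    by (rule spec_norm_nonneg)
  show "dist (quad_model_grad g H u) (quad_model_grad g H v) \<le> spec_norm H * dist u v" for u v
    using norm_matrix_vector_mult_le[of H "u - v"]
    by (simp add: quad_model_grad_def dist_norm matrix_vector_mult_diff_distrib)
qed

lemma norm_le_sqrt_card_mult:
  fixes w :: "real^'m"
  assumes "\<And>i. \<bar>w $ i\<bar> \<le> R"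
  shows "norm w \<le> sqrt (real CARD('m)) * R"
proof -
  have "R \<ge> 0"
    using assms[of undefined] by linarith
  have "(\<Sum>i\<in>UNIV. (w $ i)\<^sup>2) \<le> (\<Sum>i\<in>(UNIV::'m set). R\<^sup>2)"
    by (intro sum_mono) (metis abs_ge_zero assms power2_abs power_mono)
  then have "sqrt (\<Sum>i\<in>UNIV. (w $ i)\<^sup>2) \<le> sqrt (real CARD('m) * R\<^sup>2)"
    by simp
  with \<open>R \<ge> 0\<close> show ?thesis
    unfolding norm_vec_def L2_set_def by (simp add: real_sqrt_mult)
qed

lemma norm_gradient_le_of_small_on_samples:
  fixes e :: "real^'n \<Rightarrow> real" and G :: "real^'n \<Rightarrow> real^'n" and Y :: "'m::finite \<Rightarrow> real^'n"
    and y0 :: "real^'n"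
  defines "Ls \<equiv> \<chi> i k. (Y i - y0) $ k"
  assumes "\<delta> > 0"
    and grad: "\<And>z. z \<in> cball y0 \<delta> \<Longrightarrow> GDERIV e z :> G z"
    and lip: "M-lipschitz_on (cball y0 \<delta>) G"
    and e_y0: "\<bar>e y0\<bar> \<le> \<epsilon>" and e_Y: "\<And>i. \<bar>e (Y i)\<bar> \<le> \<epsilon>"
    and Y_ball: "\<And>i. Y i \<in> cball y0 \<delta>"
    and inj: "inj ((*v) Ls)"
    and pinv_bound: "spec_norm (pinv ((1/\<delta>) *\<^sub>R Ls)) \<le> \<kappa>s"
    and x: "x \<in> cball y0 \<delta>"
  shows "norm (G x) \<le> \<kappa>s * sqrt (real CARD('m)) * (2 * \<epsilon> / \<delta> + 3/2 * M * \<delta>)"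
proof -
  have y0_ball: "y0 \<in> cball y0 \<delta>"
    using \<open>\<delta> > 0\<close> by simp
  have "\<bar>(Ls *v G x) $ i\<bar> \<le> 2 * \<epsilon> + 3/2 * M * \<delta>\<^sup>2" for i
  proof -
    have M: "M \<ge> 0"
      using lipschitz_on_nonneg[OF lip] .
    have dx: "norm (y0 - x) \<le> \<delta>" and dY: "norm (Y i - y0) \<le> \<delta>"
      using x Y_ball[of i] by (auto simp: dist_norm norm_minus_commute)
    have "norm (y0 - x) * norm (Y i - y0) \<le> \<delta>\<^sup>2"
      using mult_mono[OF dx dY] \<open>\<delta> > 0\<close> by (simp add: power2_eq_square)
    moreover have "(norm (Y i - y0))\<^sup>2 \<le> \<delta>\<^sup>2"
      using dY by (simp add: power_mono)
    ultimately have "M * norm (y0 - x) * norm (Y i - y0) + M / 2 * (norm (Y i - y0))\<^sup>2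
                       \<le> M * \<delta>\<^sup>2 + M / 2 * \<delta>\<^sup>2"
      using M by (simp only: mult.assoc) (intro add_mono mult_left_mono; simp)
    moreover have "(Ls *v G x) $ i = G x \<bullet> (Y i - y0)"
      by (simp add: Ls_def matrix_vector_mult_def inner_vec_def mult.commute)
    moreover have "\<bar>G x \<bullet> (Y i - y0)\<bar> \<le> \<bar>e y0\<bar> + \<bar>e (Y i)\<bar>
        + M * norm (y0 - x) * norm (Y i - y0) + M / 2 * (norm (Y i - y0))\<^sup>2"
      using convex_cball grad lip y0_ball Y_ball x by (rule inner_gradient_le_of_lipschitz)
    ultimately show ?thesis
      using e_y0 e_Y[of i] by linarith
  qed
  then have norm_Ls: "norm (Ls *v G x) \<le> sqrt (real CARD('m)) * (2 * \<epsilon> + 3/2 * M * \<delta>\<^sup>2)"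
    by (rule norm_le_sqrt_card_mult)
  have scaled: "((1/\<delta>) *\<^sub>R Ls) *v v = (1/\<delta>) *\<^sub>R (Ls *v v)" for v
    by (simp add: scaleR_matrix_vector_assoc)
  have "inj ((*v) ((1/\<delta>) *\<^sub>R Ls))"
    using inj \<open>\<delta> > 0\<close> unfolding vec.inj_iff_eq_0 scaled by simp
  then have "norm (G x) \<le> spec_norm (pinv ((1/\<delta>) *\<^sub>R Ls)) * (norm (Ls *v G x) / \<delta>)"
    using norm_le_spec_norm_pinv[of "(1/\<delta>) *\<^sub>R Ls" "G x"] \<open>\<delta> > 0\<close> by (simp add: scaled)
  also have "\<dots> \<le> \<kappa>s * (sqrt (real CARD('m)) * (2 * \<epsilon> + 3/2 * M * \<delta>\<^sup>2) / \<delta>)"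
    using pinv_bound norm_Ls \<open>\<delta> > 0\<close> order_trans[OF spec_norm_nonneg pinv_bound]
    by (intro mult_mono divide_right_mono) (auto simp: spec_norm_nonneg)
  also have "\<dots> = \<kappa>s * sqrt (real CARD('m)) * (2 * \<epsilon> / \<delta> + 3/2 * M * \<delta>)"
    using \<open>\<delta> > 0\<close> by (simp add: field_simps power2_eq_square)
  finally show ?thesis .
qed

lemma abs_le_of_lipschitz_gradient:
  fixes e :: "'a::real_inner \<Rightarrow> real"
  assumes grad: "\<And>z. z \<in> cball y0 \<delta> \<Longrightarrow> GDERIV e z :> G z"
    and lip: "M-lipschitz_on (cball y0 \<delta>) G"
    and x: "x \<in> cball y0 \<delta>"
  shows "\<bar>e x\<bar> \<le> \<bar>e y0\<bar> + norm (G x) * \<delta> + M / 2 * \<delta>\<^sup>2"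
proof -
  have dx: "norm (y0 - x) \<le> \<delta>"
    using x by (simp add: dist_norm)
  then have y0_ball: "y0 \<in> cball y0 \<delta>"
    using norm_ge_zero[of "y0 - x"] by (simp del: norm_ge_zero)
  have "\<bar>e y0 - e x - G x \<bullet> (y0 - x)\<bar> \<le> M / 2 * (norm (y0 - x))\<^sup>2"
    using convex_cball grad lip x y0_ball by (rule lipschitz_gradient_taylor_bound)
  also have "\<dots> \<le> M / 2 * \<delta>\<^sup>2"
    using dx lipschitz_on_nonneg[OF lip] by (simp add: mult_left_mono power_mono)
  finally have "\<bar>e y0 - e x - G x \<bullet> (y0 - x)\<bar> \<le> M / 2 * \<delta>\<^sup>2" .
  moreover have "\<bar>G x \<bullet> (y0 - x)\<bar> \<le> norm (G x) * \<delta>"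
    using Cauchy_Schwarz_ineq2[of "G x" "y0 - x"] dx by (simp add: order_trans mult_left_mono)
  ultimately show ?thesis
    by linarith
qed

theorem theorem2:
  fixes f :: "real^'n \<Rightarrow> real"
    and gradf :: "real^'n \<Rightarrow> real^'n"
    and X :: "(real^'n) set"
    and L \<delta> \<kappa> \<kappa>s \<kappa>H c :: real
    and y0 :: "real^'n"
    and Y :: "'m::finite \<Rightarrow> real^'n"
    and g :: "real^'n"
    and H :: "real^'n^'n"
    and Ls :: "real^'n^'m"
  assumes bdd: "bdd_below (range f)"
    and X_open: "open X" and X_bounded: "bounded X"
    and X_large: "cball y0 \<delta> \<subseteq> X"
    and grad: "\<And>x. x \<in> X \<Longrightarrow> GDERIV f x :> gradf x"
    and lip: "L-lipschitz_on X gradf"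
    and p_lower: "CARD('n) < CARD('m)"
    and p_upper: "2 * CARD('m) < CARD('n)^2 + 3 * CARD('n)"
    and \<delta>_pos: "\<delta> > 0"
    and Y_ball: "\<And>i. Y i \<in> cball y0 \<delta>"
    and \<kappa>_nonneg: "\<kappa> \<ge> 0"
    and interp0: "\<bar>quad_model c g H y0 - f y0\<bar> \<le> \<kappa> * \<delta>^2"
    and interp: "\<And>i. \<bar>quad_model c g H (Y i) - f (Y i)\<bar> \<le> \<kappa> * \<delta>^2"
    and Ls_def: "Ls = (\<chi> i k. (Y i - y0) $ k)"
    and rank_Ls: "rank Ls = CARD('n)"
    and \<kappa>s_pos: "\<kappa>s > 0"
    and pinv_bound: "spec_norm (pinv ((1/\<delta>) *\<^sub>R Ls)) \<le> \<kappa>s"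
    and H_sym: "transpose H = H"
    and \<kappa>H_nonneg: "\<kappa>H \<ge> 0"
    and H_bound: "spec_norm H \<le> \<kappa>H"
  shows "\<forall>x \<in> X \<inter> cball y0 \<delta>.
           \<bar>f x - quad_model c g H x\<bar> \<le>
             ((1/2) * (L + \<kappa>H) + \<kappa> + 2 * \<kappa>s * sqrt (real CARD('m)) * (L + \<kappa> + (3/4) * \<kappa>H)) * \<delta>^2
         \<and> norm (gradf x - quad_model_grad g H x) \<le>
             2 * \<kappa>s * sqrt (real CARD('m)) * (L + \<kappa> + (3/4) * \<kappa>H) * \<delta>"
proof
  fix x assume "x \<in> X \<inter> cball y0 \<delta>"
  then have x: "x \<in> cball y0 \<delta>" by blast
  define e where "e z = f z - quad_model c g H z" for z
  define G where "G z = gradf z - quad_model_grad g H z" for z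
  have grad_e: "GDERIV e z :> G z" if "z \<in> cball y0 \<delta>" for z
    unfolding e_def G_def using grad X_large that by (intro GDERIV_diff GDERIV_quad_model H_sym) auto
  have "(L + spec_norm H)-lipschitz_on (cball y0 \<delta>) G"
    unfolding G_def
    by (intro lipschitz_on_diff lipschitz_on_subset[OF lip X_large] lipschitz_on_quad_model_grad)
  then have lip_G: "(L + \<kappa>H)-lipschitz_on (cball y0 \<delta>) G"
    by (rule lipschitz_on_le) (simp add: H_bound)
  have e_y0: "\<bar>e y0\<bar> \<le> \<kappa> * \<delta>\<^sup>2" and e_Y: "\<bar>e (Y i)\<bar> \<le> \<kappa> * \<delta>\<^sup>2" for i
    using interp0 interp[of i] by (simp_all add: e_def abs_minus_commute)
  have "inj ((*v) (\<chi> i k. (Y i - y0) $ k))"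
    using rank_Ls full_rank_injective Ls_def by blast
  from norm_gradient_le_of_small_on_samples[OF \<delta>_pos grad_e lip_G e_y0 e_Y Y_ball this pinv_bound[unfolded Ls_def] x]
  have "norm (G x) \<le> \<kappa>s * sqrt (real CARD('m)) * (2 * \<kappa> + 3/2 * (L + \<kappa>H)) * \<delta>"
    using \<delta>_pos by (simp add: power2_eq_square algebra_simps)
  also have "\<dots> \<le> 2 * \<kappa>s * sqrt (real CARD('m)) * (L + \<kappa> + (3/4) * \<kappa>H) * \<delta>"
    using lipschitz_on_nonneg[OF lip] \<kappa>s_pos \<delta>_pos by (intro mult_right_mono) (auto simp: algebra_simps)
  finally have grad_bound: "norm (G x) \<le> 2 * \<kappa>s * sqrt (real CARD('m)) * (L + \<kappa> + (3/4) * \<kappa>H) * \<delta>" .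
  moreover have "\<bar>e x\<bar> \<le> \<bar>e y0\<bar> + norm (G x) * \<delta> + (L + \<kappa>H) / 2 * \<delta>\<^sup>2"
    using grad_e lip_G x by (rule abs_le_of_lipschitz_gradient)
  ultimately show "\<bar>f x - quad_model c g H x\<bar> \<le>
             ((1/2) * (L + \<kappa>H) + \<kappa> + 2 * \<kappa>s * sqrt (real CARD('m)) * (L + \<kappa> + (3/4) * \<kappa>H)) * \<delta>^2
         \<and> norm (gradf x - quad_model_grad g H x) \<le>
             2 * \<kappa>s * sqrt (real CARD('m)) * (L + \<kappa> + (3/4) * \<kappa>H) * \<delta>"
    using e_y0 mult_right_mono[OF grad_bound, of \<delta>] \<delta>_pos
    by (auto simp: e_def G_def power2_eq_square algebra_simps)
qed

end
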